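(* Let $G$ be a $3$-connected $\Delta$-regular graph. If $\alpha$ and $\beta$ are unfrozen $(\Delta+1)$-colourings of $G$, then $\alpha\sim\beta$.
   Context: A $(\Delta+1)$-colouring is an $L$-colouring for the list-assignment $L(v)=\{1,\ldots,\Delta+1\}$ for all $v$, i.e. a proper colouring with colours in $\{1,\ldots,\Delta+1\}$. A vertex $v$ is frozen under a colouring $\varphi$ if every colour of $L(v)\setminus\{\varphi(v)\}$ appears on a neighbour of $v$; a colouring is unfrozen if at least one vertex is not frozen. $\alpha\sim\beta$ means $\alpha$ can be transformed into $\beta$ by a sequence of single-vertex recolouring steps, each keeping the colouring a proper $(\Delta+1)$-colouring. *)

theory Defs
  imports Main
begin

definition simple_graph :: "'a set \<Rightarrow> ('a \<Rightarrow> 'a \<Rightarrow> bool) \<Rightarrow> bool" where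
  "simple_graph V E \<longleftrightarrow> finite V \<and> (\<forall>u v. E u v \<longrightarrow> u \<in> V \<and> v \<in> V)
     \<and> (\<forall>u v. E u v \<longrightarrow> E v u) \<and> (\<forall>v. \<not> E v v)"

definition nbrs :: "'a set \<Rightarrow> ('a \<Rightarrow> 'a \<Rightarrow> bool) \<Rightarrow> 'a \<Rightarrow> 'a set" where
  "nbrs V E v = {u \<in> V. E v u}"

definition regular :: "'a set \<Rightarrow> ('a \<Rightarrow> 'a \<Rightarrow> bool) \<Rightarrow> nat \<Rightarrow> bool" where
  "regular V E d \<longleftrightarrow> (\<forall>v \<in> V. card (nbrs V E v) = d)"

definition connected_induced :: "'a set \<Rightarrow> ('a \<Rightarrow> 'a \<Rightarrow> bool) \<Rightarrow> bool" where
  "connected_induced S E \<longleftrightarrow>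
     (\<forall>u \<in> S. \<forall>v \<in> S. (\<lambda>x y. x \<in> S \<and> y \<in> S \<and> E x y)\<^sup>*\<^sup>* u v)"

definition k_connected :: "'a set \<Rightarrow> ('a \<Rightarrow> 'a \<Rightarrow> bool) \<Rightarrow> nat \<Rightarrow> bool" where
  "k_connected V E k \<longleftrightarrow> card V > k \<and>
     (\<forall>X. X \<subseteq> V \<and> card X < k \<longrightarrow> connected_induced (V - X) E)"

definition proper_colouring :: "'a set \<Rightarrow> ('a \<Rightarrow> 'a \<Rightarrow> bool) \<Rightarrow> nat \<Rightarrow> ('a \<Rightarrow> nat) \<Rightarrow> bool" where
  "proper_colouring V E k \<phi> \<longleftrightarrow> (\<forall>v \<in> V. \<phi> v \<in> {1..k}) \<and> (\<forall>u v. E u v \<longrightarrow> \<phi> u \<noteq> \<phi> v)"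

definition frozen :: "'a set \<Rightarrow> ('a \<Rightarrow> 'a \<Rightarrow> bool) \<Rightarrow> nat \<Rightarrow> ('a \<Rightarrow> nat) \<Rightarrow> 'a \<Rightarrow> bool" where
  "frozen V E k \<phi> v \<longleftrightarrow> (\<forall>c \<in> {1..k} - {\<phi> v}. \<exists>u \<in> nbrs V E v. \<phi> u = c)"

definition unfrozen :: "'a set \<Rightarrow> ('a \<Rightarrow> 'a \<Rightarrow> bool) \<Rightarrow> nat \<Rightarrow> ('a \<Rightarrow> nat) \<Rightarrow> bool" where
  "unfrozen V E k \<phi> \<longleftrightarrow> (\<exists>v \<in> V. \<not> frozen V E k \<phi> v)"

definition recolour_step :: "'a set \<Rightarrow> ('a \<Rightarrow> 'a \<Rightarrow> bool) \<Rightarrow> nat \<Rightarrow> ('a \<Rightarrow> nat) \<Rightarrow> ('a \<Rightarrow> nat) \<Rightarrow> bool" where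
  "recolour_step V E k \<alpha> \<beta> \<longleftrightarrow> proper_colouring V E k \<alpha> \<and> proper_colouring V E k \<beta> \<and>
     (\<exists>v \<in> V. \<forall>u \<in> V. u \<noteq> v \<longrightarrow> \<alpha> u = \<beta> u)"

definition reconf_equiv :: "'a set \<Rightarrow> ('a \<Rightarrow> 'a \<Rightarrow> bool) \<Rightarrow> nat \<Rightarrow> ('a \<Rightarrow> nat) \<Rightarrow> ('a \<Rightarrow> nat) \<Rightarrow> bool" where
  "reconf_equiv V E k \<alpha> \<beta> \<longleftrightarrow> (recolour_step V E k)\<^sup>*\<^sup>* \<alpha> \<beta>"

end

theory Submission
  imports Defs
begin

(* Let x, y be a monochromatic pair at distance two. Deleting x and y leaves a connected graph
   (3-connectivity) in which every vertex has more remaining colours than remaining neighbours,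
   and the common neighbour of x and y has two more, since it loses two neighbours but only one
   colour. For such list assignments all list colourings are reconfigurable (peel off a vertex
   with two spare colours and lift recolouring sequences), so all colourings agreeing on x, y are
   equivalent. An unfrozen colouring contains such a pair in the neighbourhood of a vertex with
   a missing colour, every vertex of a non-complete regular connected graph has such a pair among
   its neighbours, and prescribing colours on two disjoint pairs chains these classes together. *)

section \<open>Reconfiguring list colourings with slack\<close>

abbreviation induced :: "'a set \<Rightarrow> ('a \<Rightarrow> 'a \<Rightarrow> bool) \<Rightarrow> 'a \<Rightarrow> 'a \<Rightarrow> bool" where
  "induced U E \<equiv> \<lambda>x y. x \<in> U \<and> y \<in> U \<and> E x y"

definition list_colouring :: "'a set \<Rightarrow> ('a \<Rightarrow> 'a \<Rightarrow> bool) \<Rightarrow> ('a \<Rightarrow> 'c set) \<Rightarrow> ('a \<Rightarrow> 'c) \<Rightarrow> bool" where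
  "list_colouring U E L \<phi> \<longleftrightarrow> (\<forall>u\<in>U. \<phi> u \<in> L u) \<and> (\<forall>x\<in>U. \<forall>y\<in>U. E x y \<longrightarrow> \<phi> x \<noteq> \<phi> y)"

definition list_recolour_step ::
    "'a set \<Rightarrow> ('a \<Rightarrow> 'a \<Rightarrow> bool) \<Rightarrow> ('a \<Rightarrow> 'c set) \<Rightarrow> ('a \<Rightarrow> 'c) \<Rightarrow> ('a \<Rightarrow> 'c) \<Rightarrow> bool" where
  "list_recolour_step U E L \<phi> \<psi> \<longleftrightarrow> list_colouring U E L \<phi> \<and> list_colouring U E L \<psi> \<and>
     (\<exists>v. \<forall>u\<in>U. u \<noteq> v \<longrightarrow> \<phi> u = \<psi> u)"

definition slack_list_assignment :: "'a set \<Rightarrow> ('a \<Rightarrow> 'a \<Rightarrow> bool) \<Rightarrow> ('a \<Rightarrow> 'c set) \<Rightarrow> bool" where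
  "slack_list_assignment U E L \<longleftrightarrow> finite U \<and> (\<forall>u\<in>U. card (nbrs U E u) < card (L u)) \<and>
     (\<forall>u\<in>U. \<exists>s\<in>U. (induced U E)\<^sup>*\<^sup>* u s \<and> card (nbrs U E s) + 1 < card (L s))"

lemma exists_colour_not_in:
  assumes "finite B" and "card B < card L"
  shows "\<exists>c\<in>L. c \<notin> B"
  using assms by (meson card_mono not_le subsetI)

lemma finite_nbrs: "finite U \<Longrightarrow> finite (nbrs U E u)"
  unfolding nbrs_def by simp

lemma nbrs_Diff: "nbrs (U - X) E u = nbrs U E u - X"
  unfolding nbrs_def by auto

lemma list_colouring_subset: "U' \<subseteq> U \<Longrightarrow> list_colouring U E L \<phi> \<Longrightarrow> list_colouring U' E L \<phi>"
  unfolding list_colouring_def by blast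

lemma list_colouring_insert:
  assumes "symp E" and "irreflp E" and "list_colouring U E L \<phi>"
    and "c \<in> L w" and "c \<notin> \<phi> ` nbrs U E w"
  shows "list_colouring (insert w U) E L (\<phi>(w := c))"
  using assms unfolding list_colouring_def nbrs_def
  by (auto dest: sympD irreflpD)

lemma card_nbrs_Diff_le: "finite U \<Longrightarrow> card (nbrs (U - X) E u) \<le> card (nbrs U E u)"
  by (simp add: nbrs_Diff card_mono finite_nbrs)

lemma card_nbrs_Diff_adjacent:
  "finite U \<Longrightarrow> s \<in> U \<Longrightarrow> E u s \<Longrightarrow> card (nbrs (U - {s}) E u) + 1 = card (nbrs U E u)"
proof -
  assume "finite U" "s \<in> U" "E u s"
  then have "s \<in> nbrs U E u"
    unfolding nbrs_def by simp
  then show ?thesis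
    using card.remove[OF finite_nbrs[OF \<open>finite U\<close>]] by (simp add: nbrs_Diff)
qed

lemma list_colouring_extend:
  assumes "symp E" and "irreflp E" and "finite U" and "\<forall>u\<in>U. card (nbrs U E u) < card (L u)"
    and "F \<subseteq> U" and "list_colouring F E L \<phi>"
  shows "\<exists>\<psi>. list_colouring U E L \<psi> \<and> (\<forall>u\<in>F. \<psi> u = \<phi> u)"
proof -
  have "\<exists>\<psi>. list_colouring U E L \<psi> \<and> (\<forall>u\<in>U - W. \<psi> u = \<phi> u)"
    if "finite W" "W \<subseteq> U" "list_colouring (U - W) E L \<phi>" for W and \<phi> :: "'a \<Rightarrow> 'b"
    using that
  proof (induction W arbitrary: \<phi> rule: finite_induct)
    case empty
    then show ?case by auto
  next
    case (insert w W)
    let ?U = "U - insert w W"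
    have "card (\<phi> ` nbrs ?U E w) \<le> card (nbrs ?U E w)"
      using \<open>finite U\<close> by (simp add: card_image_le finite_nbrs)
    also have "\<dots> \<le> card (nbrs U E w)"
      using \<open>finite U\<close> by (rule card_nbrs_Diff_le)
    also have "\<dots> < card (L w)"
      using assms(4) insert.prems(1) by blast
    finally have "card (\<phi> ` nbrs ?U E w) < card (L w)" .
    moreover have "finite (\<phi> ` nbrs ?U E w)"
      using \<open>finite U\<close> by (simp add: finite_nbrs)
    ultimately obtain c where c: "c \<in> L w" "c \<notin> \<phi> ` nbrs ?U E w"
      using exists_colour_not_in by blast
    have "insert w ?U = U - W"
      using insert.hyps(2) insert.prems(1) by blast
    then have "list_colouring (U - W) E L (\<phi>(w := c))"
      using list_colouring_insert[OF assms(1,2) insert.prems(2) c] by simp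
    then obtain \<psi> where "list_colouring U E L \<psi>" "\<forall>u\<in>U - W. \<psi> u = (\<phi>(w := c)) u"
      using insert.IH insert.prems(1) by blast
    then show ?case
      by (intro exI[of _ \<psi>]) auto
  qed
  from this[of "U - F"] show ?thesis
    using assms(3,5,6) by (simp add: double_diff)
qed

lemma slack_list_assignment_Diff:
  assumes "slack_list_assignment U E L"
  shows "slack_list_assignment (U - {s}) E L"
proof -
  have fin: "finite U" and deg: "\<forall>u\<in>U. card (nbrs U E u) < card (L u)"
    using assms unfolding slack_list_assignment_def by auto
  let ?U = "U - {s}"
  have reach: "\<exists>s'\<in>?U. (induced ?U E)\<^sup>*\<^sup>* y s' \<and> card (nbrs ?U E s') + 1 < card (L s')"
    if "(induced U E)\<^sup>*\<^sup>* y t" "y \<in> ?U" "card (nbrs U E t) + 1 < card (L t)" for y t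
    using that
  proof (induction rule: converse_rtranclp_induct)
    case base
    then show ?case
      using card_nbrs_Diff_le[OF fin, of "{s}" E t] by fastforce
  next
    case (step y z)
    show ?case
    proof (cases "z = s")
      case True
      then have "card (nbrs ?U E y) + 1 = card (nbrs U E y)"
        using card_nbrs_Diff_adjacent[OF fin] step.hyps(1) by blast
      then have "card (nbrs ?U E y) + 1 < card (L y)"
        using deg step.prems(1) by force
      then show ?thesis
        using step.prems(1) by blast
    next
      case False
      then obtain s' where s': "s' \<in> ?U" "(induced ?U E)\<^sup>*\<^sup>* z s'" "card (nbrs ?U E s') + 1 < card (L s')"
        using step by blast
      have "induced ?U E y z"
        using step.hyps(1) step.prems(1) False by blast
      then have "(induced ?U E)\<^sup>*\<^sup>* y s'"
        using s'(2) by (rule converse_rtranclp_into_rtranclp)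
      then show ?thesis
        using s'(1,3) by blast
    qed
  qed
  show ?thesis
    unfolding slack_list_assignment_def
  proof (intro conjI ballI)
    show "finite ?U"
      using fin by simp
  next
    fix u assume "u \<in> ?U"
    then show "card (nbrs ?U E u) < card (L u)"
      using deg card_nbrs_Diff_le[OF fin, of "{s}" E u] by force
  next
    fix u assume "u \<in> ?U"
    then show "\<exists>s'\<in>?U. (induced ?U E)\<^sup>*\<^sup>* u s' \<and> card (nbrs ?U E s') + 1 < card (L s')"
      using assms reach unfolding slack_list_assignment_def by blast
  qed
qed

lemma list_recolour_step_lift:
  assumes "symp E" and "irreflp E" and "finite U" and slack: "card (nbrs U E s) + 1 < card (L s)"
    and step: "list_recolour_step (U - {s}) E L \<mu> \<delta>"
    and \<mu>': "list_colouring U E L \<mu>'" and agree: "\<forall>u\<in>U - {s}. \<mu>' u = \<mu> u"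
  shows "\<exists>\<delta>'. list_colouring U E L \<delta>' \<and> (\<forall>u\<in>U - {s}. \<delta>' u = \<delta> u) \<and>
    (list_recolour_step U E L)\<^sup>*\<^sup>* \<mu>' \<delta>'"
proof -
  obtain v where v: "\<forall>u\<in>U - {s}. u \<noteq> v \<longrightarrow> \<mu> u = \<delta> u"
    using step unfolding list_recolour_step_def by blast
  have \<delta>: "list_colouring (U - {s}) E L \<delta>"
    using step unfolding list_recolour_step_def by blast
  \<comment> \<open>s has two spare colours, so it can first move to a colour free both before and after the step.\<close>
  let ?B = "insert (\<delta> v) (\<mu>' ` nbrs U E s)"
  have fin_nbrs: "finite (nbrs U E s)"
    using finite_nbrs[OF \<open>finite U\<close>] .
  then have "card ?B \<le> card (nbrs U E s) + 1"
    using card_image_le[OF fin_nbrs, of \<mu>'] by (simp add: card_insert_if)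
  then have "card ?B < card (L s)"
    using slack by linarith
  moreover have "finite ?B"
    using fin_nbrs by simp
  ultimately obtain c where c: "c \<in> L s" "c \<notin> ?B"
    using exists_colour_not_in by blast
  have nbrs_sub: "nbrs (U - {s}) E s \<subseteq> nbrs U E s"
    unfolding nbrs_def by blast
  then have "c \<notin> \<mu>' ` nbrs (U - {s}) E s"
    using c by blast
  then have \<mu>c: "list_colouring U E L (\<mu>'(s := c))"
    using list_colouring_insert[OF assms(1,2) list_colouring_subset[OF _ \<mu>'] c(1)]
      list_colouring_subset[of U "insert s (U - {s})"] by blast
  have "\<delta> ` nbrs (U - {s}) E s \<subseteq> ?B"
    using v agree nbrs_sub unfolding nbrs_def by force
  then have "c \<notin> \<delta> ` nbrs (U - {s}) E s"
    using c by blast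
  then have \<delta>c: "list_colouring U E L (\<delta>(s := c))"
    using list_colouring_insert[OF assms(1,2) \<delta> c(1)]
      list_colouring_subset[of U "insert s (U - {s})"] by blast
  have "list_recolour_step U E L \<mu>' (\<mu>'(s := c))"
    unfolding list_recolour_step_def using \<mu>' \<mu>c by auto
  moreover have "list_recolour_step U E L (\<mu>'(s := c)) (\<delta>(s := c))"
    unfolding list_recolour_step_def using \<mu>c \<delta>c v agree by auto
  ultimately have "(list_recolour_step U E L)\<^sup>*\<^sup>* \<mu>' (\<delta>(s := c))"
    by (meson converse_rtranclp_into_rtranclp r_into_rtranclp)
  then show ?thesis
    using \<delta>c by (intro exI[of _ "\<delta>(s := c)"]) simp
qed

lemma list_recolour_path_lift:
  assumes "symp E" and "irreflp E" and "finite U" and "card (nbrs U E s) + 1 < card (L s)"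
    and "(list_recolour_step (U - {s}) E L)\<^sup>*\<^sup>* \<mu> \<delta>"
    and "list_colouring U E L \<mu>'" and "\<forall>u\<in>U - {s}. \<mu>' u = \<mu> u"
  shows "\<exists>\<delta>'. list_colouring U E L \<delta>' \<and> (\<forall>u\<in>U - {s}. \<delta>' u = \<delta> u) \<and>
    (list_recolour_step U E L)\<^sup>*\<^sup>* \<mu>' \<delta>'"
  using assms(5)
proof (induction rule: rtranclp_induct)
  case base
  then show ?case
    using assms(6,7) by blast
next
  case (step \<gamma> \<delta>)
  then obtain \<gamma>' where "list_colouring U E L \<gamma>'" "\<forall>u\<in>U - {s}. \<gamma>' u = \<gamma> u"
    "(list_recolour_step U E L)\<^sup>*\<^sup>* \<mu>' \<gamma>'"
    by blast
  then show ?case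
    using list_recolour_step_lift[OF assms(1-4) step.hyps(2)] by (meson rtranclp_trans)
qed

theorem slack_list_colourings_reconfigurable:
  assumes "symp E" and "irreflp E" and "slack_list_assignment U E L"
    and "list_colouring U E L \<phi>" and "list_colouring U E L \<psi>"
  shows "(list_recolour_step U E L)\<^sup>*\<^sup>* \<phi> \<psi>"
  using assms(3-)
proof (induction "card U" arbitrary: U \<phi> \<psi> rule: less_induct)
  case less
  show ?case
  proof (cases "U = {}")
    case True
    then have "list_recolour_step U E L \<phi> \<psi>"
      using less.prems(2,3) unfolding list_recolour_step_def by simp
    then show ?thesis
      by blast
  next
    case False
    then obtain s where s: "s \<in> U" "card (nbrs U E s) + 1 < card (L s)"
      using less.prems(1) unfolding slack_list_assignment_def by blast
    have fin: "finite U"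
      using less.prems(1) unfolding slack_list_assignment_def by blast
    have "(list_recolour_step (U - {s}) E L)\<^sup>*\<^sup>* \<phi> \<psi>"
      using less.hyps[OF card_Diff1_less[OF fin s(1)] slack_list_assignment_Diff[OF less.prems(1)]]
        list_colouring_subset[of "U - {s}" U] less.prems(2,3) by blast
    then obtain \<delta> where \<delta>: "list_colouring U E L \<delta>" "\<forall>u\<in>U - {s}. \<delta> u = \<psi> u"
      "(list_recolour_step U E L)\<^sup>*\<^sup>* \<phi> \<delta>"
      using list_recolour_path_lift[OF assms(1,2) fin s(2) _ less.prems(2)] by blast
    have "list_recolour_step U E L \<delta> \<psi>"
      unfolding list_recolour_step_def using \<delta> less.prems(3) by auto
    then show ?thesis
      using \<delta>(3) by simp
  qed
qed

section \<open>Extending and fixing partial colourings\<close>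

lemma simple_graphD:
  assumes "simple_graph V E"
  shows "finite V" and "symp E" and "irreflp E"
  using assms unfolding simple_graph_def symp_def irreflp_def by blast+

lemma proper_colouring_iff_list_colouring:
  "simple_graph V E \<Longrightarrow> proper_colouring V E k \<phi> \<longleftrightarrow> list_colouring V E (\<lambda>_. {1..k}) \<phi>"
  unfolding proper_colouring_def list_colouring_def simple_graph_def by blast

lemma reconf_equiv_trans [trans]:
  "reconf_equiv V E k \<alpha> \<beta> \<Longrightarrow> reconf_equiv V E k \<beta> \<gamma> \<Longrightarrow> reconf_equiv V E k \<alpha> \<gamma>"
  unfolding reconf_equiv_def by (rule rtranclp_trans)

lemma k_connected_imp_connected: "k_connected V E k \<Longrightarrow> 0 < k \<Longrightarrow> connected_induced V E"
  unfolding k_connected_def by (force dest: spec[of _ "{}"])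

lemma regular_colouring_extend:
  assumes "simple_graph V E" and "regular V E \<Delta>" and "F \<subseteq> V"
    and "list_colouring F E (\<lambda>_. {1..\<Delta> + 1}) \<phi>"
  shows "\<exists>\<psi>. proper_colouring V E (\<Delta> + 1) \<psi> \<and> (\<forall>u\<in>F. \<psi> u = \<phi> u)"
proof -
  have "\<forall>u\<in>V. card (nbrs V E u) < card {1..\<Delta> + 1}"
    using assms(2) unfolding regular_def by simp
  then show ?thesis
    using list_colouring_extend[OF simple_graphD(2,3,1)[OF assms(1)] _ assms(3,4)]
      proper_colouring_iff_list_colouring[OF assms(1)] by blast
qed

definition residual_lists ::
    "'a set \<Rightarrow> ('a \<Rightarrow> 'a \<Rightarrow> bool) \<Rightarrow> nat \<Rightarrow> 'a set \<Rightarrow> ('a \<Rightarrow> nat) \<Rightarrow> 'a \<Rightarrow> nat set" where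
  "residual_lists V E k X \<phi> u = {1..k} - \<phi> ` (nbrs V E u \<inter> X)"

lemma list_colouring_residual_lists:
  assumes "proper_colouring V E k \<psi>" and "\<forall>u\<in>X. \<psi> u = \<phi> u"
  shows "list_colouring (V - X) E (residual_lists V E k X \<phi>) \<psi>"
  using assms unfolding list_colouring_def residual_lists_def proper_colouring_def nbrs_def
  by fastforce

lemma card_residual_lists:
  assumes "proper_colouring V E k \<phi>"
  shows "card (residual_lists V E k X \<phi> u) + card (\<phi> ` (nbrs V E u \<inter> X)) = k"
proof -
  have sub: "\<phi> ` (nbrs V E u \<inter> X) \<subseteq> {1..k}"
    using assms unfolding proper_colouring_def nbrs_def by auto
  show ?thesis
    using card_mono[OF finite_atLeastAtMost sub] card_Diff_subset[OF finite_subset[OF sub] sub]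
    unfolding residual_lists_def by simp
qed

lemma card_nbrs_Diff_Int:
  "finite V \<Longrightarrow> card (nbrs (V - X) E u) + card (nbrs V E u \<inter> X) = card (nbrs V E u)"
  using card_Int_Diff[OF finite_nbrs, of V E u X] by (simp add: nbrs_Diff)

lemma proper_colouring_of_residual:
  assumes "simple_graph V E" and "proper_colouring V E k \<phi>"
    and "list_colouring (V - X) E (residual_lists V E k X \<phi>) \<gamma>"
  shows "proper_colouring V E k (\<lambda>u. if u \<in> X then \<phi> u else \<gamma> u)"
  unfolding proper_colouring_def
proof (intro conjI ballI allI impI)
  fix u assume "u \<in> V"
  then show "(if u \<in> X then \<phi> u else \<gamma> u) \<in> {1..k}"
    using assms(2,3) unfolding proper_colouring_def list_colouring_def residual_lists_def by auto
next
  fix a b assume "E a b"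
  then have ab: "a \<in> V" "b \<in> V" "E b a"
    using assms(1) unfolding simple_graph_def by blast+
  have cross: "\<gamma> u \<noteq> \<phi> w" if "u \<in> V - X" "w \<in> X" "E u w" for u w
    using assms(1,3) that unfolding simple_graph_def list_colouring_def residual_lists_def nbrs_def
    by blast
  show "(if a \<in> X then \<phi> a else \<gamma> a) \<noteq> (if b \<in> X then \<phi> b else \<gamma> b)"
    using cross[of a b] cross[of b a] \<open>E a b\<close> ab assms(2,3)
    unfolding proper_colouring_def list_colouring_def by auto
qed

lemma reconf_equiv_of_residual_reconfiguration:
  assumes "simple_graph V E" and "x \<in> X" and "X \<subseteq> V"
    and "proper_colouring V E k \<phi>" and "\<forall>u\<in>X. \<psi> u = \<phi> u"
    and "(list_recolour_step (V - X) E (residual_lists V E k X \<phi>))\<^sup>*\<^sup>* \<phi> \<psi>"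
  shows "reconf_equiv V E k \<phi> \<psi>"
proof -
  let ?L = "residual_lists V E k X \<phi>"
  define extend where "extend \<gamma> u = (if u \<in> X then \<phi> u else \<gamma> u)" for \<gamma> :: "'a \<Rightarrow> nat" and u
  have step: "recolour_step V E k (extend \<gamma>) (extend \<delta>)"
    if st: "list_recolour_step (V - X) E ?L \<gamma> \<delta>" for \<gamma> \<delta>
  proof -
    obtain v where v: "\<forall>u\<in>V - X. u \<noteq> v \<longrightarrow> \<gamma> u = \<delta> u"
      using st unfolding list_recolour_step_def by blast
    \<comment> \<open>The list step may name a vertex outside V; then any vertex serves.\<close>
    have "\<forall>u\<in>V. u \<noteq> (if v \<in> V then v else x) \<longrightarrow> extend \<gamma> u = extend \<delta> u"
      using v unfolding extend_def by auto
    moreover have "(if v \<in> V then v else x) \<in> V"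
      using assms(2,3) by auto
    ultimately show ?thesis
      using st proper_colouring_of_residual[OF assms(1,4)]
      unfolding recolour_step_def list_recolour_step_def extend_def by blast
  qed
  have "(recolour_step V E k)\<^sup>*\<^sup>* (extend \<phi>) (extend \<psi>)"
    using assms(6) by (induction rule: rtranclp_induct) (auto intro: rtranclp.rtrancl_into_rtrancl step)
  moreover have "extend \<phi> = \<phi>" "extend \<psi> = \<psi>"
    using assms(5) unfolding extend_def by auto
  ultimately show ?thesis
    unfolding reconf_equiv_def by simp
qed

section \<open>Monochromatic pairs at distance two\<close>

definition dist_two :: "'a set \<Rightarrow> ('a \<Rightarrow> 'a \<Rightarrow> bool) \<Rightarrow> 'a \<Rightarrow> 'a \<Rightarrow> bool" where
  "dist_two V E x y \<longleftrightarrow> x \<in> V \<and> y \<in> V \<and> x \<noteq> y \<and> \<not> E x y \<and> (\<exists>z\<in>V. E z x \<and> E z y)"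

lemma dist_two_no_edge:
  assumes "simple_graph V E" and "dist_two V E x y" and "a \<in> {x, y}" and "b \<in> {x, y}"
  shows "\<not> E a b"
  using assms unfolding simple_graph_def dist_two_def by blast

lemma dist_two_degree_ge_2:
  assumes "simple_graph V E" and "regular V E \<Delta>" and "dist_two V E x y"
  shows "2 \<le> \<Delta>"
proof -
  obtain z where z: "z \<in> V" "E z x" "E z y" and "x \<in> V" "y \<in> V" "x \<noteq> y"
    using assms(3) unfolding dist_two_def by blast
  then have "{x, y} \<subseteq> nbrs V E z"
    unfolding nbrs_def by auto
  then have "card {x, y} \<le> card (nbrs V E z)"
    by (rule card_mono[OF finite_nbrs[OF simple_graphD(1)[OF assms(1)]]])
  then show ?thesis
    using assms(2) z(1) \<open>x \<noteq> y\<close> unfolding regular_def by simp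
qed

lemma exists_colouring_monochromatic_dist_two:
  assumes "simple_graph V E" and "regular V E \<Delta>" and "dist_two V E x y"
  shows "\<exists>\<gamma>. proper_colouring V E (\<Delta> + 1) \<gamma> \<and> \<gamma> x = \<gamma> y"
proof -
  have "list_colouring {x, y} E (\<lambda>_. {1..\<Delta> + 1}) (\<lambda>_. 1)"
    using dist_two_no_edge[OF assms(1,3)] unfolding list_colouring_def by simp
  moreover have "{x, y} \<subseteq> V"
    using assms(3) unfolding dist_two_def by blast
  ultimately obtain \<gamma> where "proper_colouring V E (\<Delta> + 1) \<gamma>" "\<forall>u\<in>{x, y}. \<gamma> u = 1"
    using regular_colouring_extend[OF assms(1,2)] by blast
  then show ?thesis
    by auto
qed

lemma exists_colouring_two_monochromatic_dist_two:
  assumes "simple_graph V E" and "regular V E \<Delta>"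
    and "dist_two V E x y" and "dist_two V E x' y'" and "{x, y} \<inter> {x', y'} = {}"
    and "f \<in> {1..\<Delta> + 1}" and "g \<in> {1..\<Delta> + 1}" and "f \<noteq> g"
  shows "\<exists>\<gamma>. proper_colouring V E (\<Delta> + 1) \<gamma> \<and> \<gamma> x = f \<and> \<gamma> y = f \<and> \<gamma> x' = g \<and> \<gamma> y' = g"
proof -
  let ?\<gamma> = "\<lambda>u. if u \<in> {x, y} then f else g"
  have "list_colouring {x, y, x', y'} E (\<lambda>_. {1..\<Delta> + 1}) ?\<gamma>"
    using dist_two_no_edge[OF assms(1,3)] dist_two_no_edge[OF assms(1,4)] assms(5-8)
    unfolding list_colouring_def by auto
  moreover have "{x, y, x', y'} \<subseteq> V"
    using assms(3,4) unfolding dist_two_def by blast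
  ultimately obtain \<gamma> where "proper_colouring V E (\<Delta> + 1) \<gamma>" "\<forall>u\<in>{x, y, x', y'}. \<gamma> u = ?\<gamma> u"
    using regular_colouring_extend[OF assms(1,2)] by blast
  then show ?thesis
    using assms(5) by (intro exI[of _ \<gamma>]) auto
qed

lemma slack_residual_lists_dist_two:
  assumes sg: "simple_graph V E" and "k_connected V E 3" and reg: "regular V E \<Delta>"
    and xy: "dist_two V E x y" and \<phi>: "proper_colouring V E (\<Delta> + 1) \<phi>" and "\<phi> x = \<phi> y"
  shows "slack_list_assignment (V - {x, y}) E (residual_lists V E (\<Delta> + 1) {x, y} \<phi>)"
proof -
  let ?U = "V - {x, y}" and ?L = "residual_lists V E (\<Delta> + 1) {x, y} \<phi>"
  have fin: "finite V"
    using sg by (rule simple_graphD)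
  have balance: "card (nbrs ?U E u) + card (nbrs V E u \<inter> {x, y}) + 1 =
      card (?L u) + card (\<phi> ` (nbrs V E u \<inter> {x, y}))" if "u \<in> V" for u
    using card_nbrs_Diff_Int[OF fin] card_residual_lists[OF \<phi>] reg that
    unfolding regular_def by simp
  have deg: "card (nbrs ?U E u) < card (?L u)" if "u \<in> V" for u
    using balance[OF that] card_image_le[of "nbrs V E u \<inter> {x, y}" \<phi>] by simp
  obtain z where z: "z \<in> V" "E z x" "E z y" and "x \<noteq> y"
    using xy unfolding dist_two_def by blast
  \<comment> \<open>The common neighbour z loses two neighbours but only one colour.\<close>
  have "nbrs V E z \<inter> {x, y} = {x, y}"
    using z sg unfolding nbrs_def simple_graph_def by blast
  then have "card (nbrs ?U E z) + 1 < card (?L z)"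
    using balance[OF z(1)] \<open>x \<noteq> y\<close> \<open>\<phi> x = \<phi> y\<close> by simp
  moreover have "z \<in> ?U"
    using z sg xy unfolding simple_graph_def dist_two_def by blast
  moreover have "connected_induced ?U E"
    using assms(2) xy unfolding k_connected_def dist_two_def by (simp add: card_insert_le_m1)
  ultimately show ?thesis
    using fin deg unfolding slack_list_assignment_def connected_induced_def by blast
qed

lemma reconf_equiv_fixed_monochromatic_dist_two:
  assumes sg: "simple_graph V E" and kc: "k_connected V E 3" and reg: "regular V E \<Delta>"
    and xy: "dist_two V E x y"
    and \<phi>: "proper_colouring V E (\<Delta> + 1) \<phi>" and \<psi>: "proper_colouring V E (\<Delta> + 1) \<psi>"
    and "\<phi> x = \<phi> y" and "\<psi> x = \<phi> x" and "\<psi> y = \<phi> y"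
  shows "reconf_equiv V E (\<Delta> + 1) \<phi> \<psi>"
proof -
  let ?L = "residual_lists V E (\<Delta> + 1) {x, y} \<phi>"
  have agree: "\<forall>u\<in>{x, y}. \<psi> u = \<phi> u"
    using assms(8,9) by simp
  have "(list_recolour_step (V - {x, y}) E ?L)\<^sup>*\<^sup>* \<phi> \<psi>"
    using slack_list_colourings_reconfigurable[OF simple_graphD(2,3)[OF sg]
        slack_residual_lists_dist_two[OF sg kc reg xy \<phi> assms(7)]]
      list_colouring_residual_lists[OF \<phi>] list_colouring_residual_lists[OF \<psi> agree] by blast
  moreover have "{x, y} \<subseteq> V"
    using xy unfolding dist_two_def by blast
  ultimately show ?thesis
    using reconf_equiv_of_residual_reconfiguration[OF sg _ _ \<phi> agree] by blast
qed

lemma connected_induced_closed_subset: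
  assumes "connected_induced V E" and "x \<in> V" and "x \<in> C" and "\<And>a b. a \<in> C \<Longrightarrow> E a b \<Longrightarrow> b \<in> C"
  shows "V \<subseteq> C"
proof
  fix v assume "v \<in> V"
  then have "(induced V E)\<^sup>*\<^sup>* x v"
    using assms(1,2) unfolding connected_induced_def by blast
  then show "v \<in> C"
    by (induction rule: rtranclp_induct) (use assms(3,4) in blast)+
qed

lemma regular_clique_nbrs_closed:
  assumes sg: "simple_graph V E" and reg: "regular V E \<Delta>" and "x \<in> V"
    and clique: "\<And>r r'. r \<in> nbrs V E x \<Longrightarrow> r' \<in> nbrs V E x \<Longrightarrow> r \<noteq> r' \<Longrightarrow> E r r'"
    and a: "a \<in> insert x (nbrs V E x)" and "E a b"
  shows "b \<in> insert x (nbrs V E x)"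
proof (cases "a = x")
  case True
  then show ?thesis
    using \<open>E a b\<close> sg unfolding simple_graph_def nbrs_def by blast
next
  case False
  let ?N = "nbrs V E x"
  have fin: "finite V"
    using sg by (rule simple_graphD)
  have aN: "a \<in> ?N"
    using a False by blast
  have sub: "insert x (?N - {a}) \<subseteq> nbrs V E a"
  proof
    fix w assume "w \<in> insert x (?N - {a})"
    moreover have "E a x"
      using aN sg unfolding nbrs_def simple_graph_def by blast
    moreover have "E a w" if "w \<in> ?N - {a}"
      using clique[OF aN] that by blast
    ultimately show "w \<in> nbrs V E a"
      using \<open>x \<in> V\<close> unfolding nbrs_def by blast
  qed
  have "x \<notin> ?N"
    using sg unfolding nbrs_def simple_graph_def by blast
  then have "card (insert x (?N - {a})) = card ?N"
    using aN card.remove[OF finite_nbrs[OF fin] aN] finite_nbrs[OF fin] by simp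
  also have "\<dots> = card (nbrs V E a)"
    using reg aN \<open>x \<in> V\<close> unfolding regular_def nbrs_def by simp
  finally have "insert x (?N - {a}) = nbrs V E a"
    using card_subset_eq[OF finite_nbrs[OF fin] sub] by blast
  moreover have "b \<in> nbrs V E a"
    using \<open>E a b\<close> sg unfolding nbrs_def simple_graph_def by blast
  ultimately show ?thesis
    by blast
qed

lemma exists_dist_two_in_nbrs:
  assumes sg: "simple_graph V E" and conn: "connected_induced V E" and reg: "regular V E \<Delta>"
    and "x \<in> V" and "u \<in> V" and "v \<in> V" and "u \<noteq> v" and "\<not> E u v"
  shows "\<exists>r r'. dist_two V E r r' \<and> E x r \<and> E x r'"
proof (rule ccontr)
  assume none: "\<not> ?thesis"
  have clique: "E r r'" if "r \<in> nbrs V E x" "r' \<in> nbrs V E x" "r \<noteq> r'" for r r'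
    using none that \<open>x \<in> V\<close> unfolding dist_two_def nbrs_def by blast
  have "V \<subseteq> insert x (nbrs V E x)"
    using connected_induced_closed_subset[OF conn \<open>x \<in> V\<close>]
      regular_clique_nbrs_closed[OF sg reg \<open>x \<in> V\<close> clique] by blast
  then show False
    using clique[of u v] assms(5-8) sg unfolding simple_graph_def nbrs_def by blast
qed

lemma reconf_equiv_monochromatic_dist_two:
  assumes sg: "simple_graph V E" and kc: "k_connected V E 3" and reg: "regular V E \<Delta>"
    and xy: "dist_two V E x y"
    and \<phi>: "proper_colouring V E (\<Delta> + 1) \<phi>" and \<psi>: "proper_colouring V E (\<Delta> + 1) \<psi>"
    and "\<phi> x = \<phi> y" and "\<psi> x = \<psi> y"
  shows "reconf_equiv V E (\<Delta> + 1) \<phi> \<psi>"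
proof -
  have "connected_induced V E"
    using kc by (rule k_connected_imp_connected) simp
  then obtain r r' where rr': "dist_two V E r r'" "E x r" "E x r'"
    using exists_dist_two_in_nbrs[OF sg _ reg] xy unfolding dist_two_def by blast
  \<comment> \<open>Route through colourings giving r, r' a colour g distinct from both \<open>\<phi> x\<close> and \<open>\<psi> x\<close>.\<close>
  have disj: "{x, y} \<inter> {r, r'} = {}"
    using dist_two_no_edge[OF sg xy] rr'(2,3) by blast
  have "card {\<phi> x, \<psi> x} \<le> 2"
    by (cases "\<phi> x = \<psi> x") simp_all
  then have "card {\<phi> x, \<psi> x} < card {1..\<Delta> + 1}"
    using dist_two_degree_ge_2[OF sg reg xy] by simp
  moreover have "finite {\<phi> x, \<psi> x}"
    by simp
  ultimately obtain g where g: "g \<in> {1..\<Delta> + 1}" "g \<noteq> \<phi> x" "g \<noteq> \<psi> x"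
    using exists_colour_not_in by blast
  have range: "\<phi> x \<in> {1..\<Delta> + 1}" "\<psi> x \<in> {1..\<Delta> + 1}"
    using \<phi> \<psi> xy unfolding proper_colouring_def dist_two_def by blast+
  obtain \<gamma> where \<gamma>: "proper_colouring V E (\<Delta> + 1) \<gamma>" "\<gamma> x = \<phi> x" "\<gamma> y = \<phi> x" "\<gamma> r = g" "\<gamma> r' = g"
    using exists_colouring_two_monochromatic_dist_two[OF sg reg xy rr'(1) disj range(1) g(1)] g(2)
    by metis
  obtain \<gamma>' where \<gamma>': "proper_colouring V E (\<Delta> + 1) \<gamma>'" "\<gamma>' x = \<psi> x" "\<gamma>' y = \<psi> x" "\<gamma>' r = g" "\<gamma>' r' = g"
    using exists_colouring_two_monochromatic_dist_two[OF sg reg xy rr'(1) disj range(2) g(1)] g(3)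
    by metis
  have "reconf_equiv V E (\<Delta> + 1) \<phi> \<gamma>"
    by (rule reconf_equiv_fixed_monochromatic_dist_two[OF sg kc reg xy \<phi> \<gamma>(1)])
      (simp_all add: \<gamma>(2,3) assms(7))
  also have "reconf_equiv V E (\<Delta> + 1) \<gamma> \<gamma>'"
    by (rule reconf_equiv_fixed_monochromatic_dist_two[OF sg kc reg rr'(1) \<gamma>(1) \<gamma>'(1)])
      (simp_all add: \<gamma>(4,5) \<gamma>'(4,5))
  also have "reconf_equiv V E (\<Delta> + 1) \<gamma>' \<psi>"
    by (rule reconf_equiv_fixed_monochromatic_dist_two[OF sg kc reg xy \<gamma>'(1) \<psi>])
      (simp_all add: \<gamma>'(2,3) assms(8))
  finally show ?thesis .
qed

lemma reconf_equiv_disjoint_monochromatic_dist_two: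
  assumes sg: "simple_graph V E" and kc: "k_connected V E 3" and reg: "regular V E \<Delta>"
    and xy: "dist_two V E x y" and xy': "dist_two V E x' y'" and disj: "{x, y} \<inter> {x', y'} = {}"
    and \<phi>: "proper_colouring V E (\<Delta> + 1) \<phi>" and \<psi>: "proper_colouring V E (\<Delta> + 1) \<psi>"
    and "\<phi> x = \<phi> y" and "\<psi> x' = \<psi> y'"
  shows "reconf_equiv V E (\<Delta> + 1) \<phi> \<psi>"
proof -
  have "(1::nat) \<in> {1..\<Delta> + 1}" "(2::nat) \<in> {1..\<Delta> + 1}"
    using dist_two_degree_ge_2[OF sg reg xy] by auto
  from exists_colouring_two_monochromatic_dist_two[OF sg reg xy xy' disj this]
  obtain \<gamma> where \<gamma>: "proper_colouring V E (\<Delta> + 1) \<gamma>" "\<gamma> x = 1" "\<gamma> y = 1" "\<gamma> x' = 2" "\<gamma> y' = 2"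
    by auto
  have "reconf_equiv V E (\<Delta> + 1) \<phi> \<gamma>"
    using reconf_equiv_monochromatic_dist_two[OF sg kc reg xy \<phi> \<gamma>(1) assms(9)] \<gamma>(2,3) by simp
  also have "reconf_equiv V E (\<Delta> + 1) \<gamma> \<psi>"
    using reconf_equiv_monochromatic_dist_two[OF sg kc reg xy' \<gamma>(1) \<psi> _ assms(10)] \<gamma>(4,5) by simp
  finally show ?thesis .
qed

lemma unfrozen_imp_monochromatic_dist_two:
  assumes sg: "simple_graph V E" and reg: "regular V E \<Delta>"
    and \<alpha>: "proper_colouring V E (\<Delta> + 1) \<alpha>" and "unfrozen V E (\<Delta> + 1) \<alpha>"
  shows "\<exists>x y. dist_two V E x y \<and> \<alpha> x = \<alpha> y"
proof -
  obtain a where a: "a \<in> V" "\<not> frozen V E (\<Delta> + 1) \<alpha> a"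
    using assms(4) unfolding unfrozen_def by blast
  then obtain c where c: "c \<in> {1..\<Delta> + 1}" "c \<noteq> \<alpha> a" "\<forall>w\<in>nbrs V E a. \<alpha> w \<noteq> c"
    unfolding frozen_def by blast
  let ?N = "nbrs V E a"
  have "\<alpha> a \<in> {1..\<Delta> + 1}"
    using \<alpha> a(1) unfolding proper_colouring_def by blast
  then have pair: "{\<alpha> a, c} \<subseteq> {1..\<Delta> + 1}"
    using c(1) by simp
  have two: "card {\<alpha> a, c} = 2"
    using c(2) by simp
  have "\<alpha> ` ?N \<subseteq> {1..\<Delta> + 1} - {\<alpha> a, c}"
    using \<alpha> c unfolding proper_colouring_def nbrs_def by fastforce
  then have "card (\<alpha> ` ?N) \<le> card ({1..\<Delta> + 1} - {\<alpha> a, c})"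
    by (simp add: card_mono)
  also have "\<dots> = \<Delta> - 1"
    using card_Diff_subset[OF _ pair] two by simp
  also have "\<dots> < card ?N"
    using reg a(1) card_mono[OF finite_atLeastAtMost pair] two unfolding regular_def by simp
  finally have "\<not> inj_on \<alpha> ?N"
    using card_image by fastforce
  then obtain x y where xy: "x \<in> ?N" "y \<in> ?N" "x \<noteq> y" "\<alpha> x = \<alpha> y"
    unfolding inj_on_def by blast
  then have "dist_two V E x y"
    using \<alpha> a(1) unfolding dist_two_def nbrs_def proper_colouring_def by auto
  then show ?thesis
    using xy(4) by blast
qed

theorem mainTheorem10:
  fixes V :: "'a set" and E :: "'a \<Rightarrow> 'a \<Rightarrow> bool" and \<Delta> :: nat
    and \<alpha> \<beta> :: "'a \<Rightarrow> nat"
  assumes "simple_graph V E"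
    and "k_connected V E 3"
    and "regular V E \<Delta>"
    and "proper_colouring V E (\<Delta> + 1) \<alpha>" and "unfrozen V E (\<Delta> + 1) \<alpha>"
    and "proper_colouring V E (\<Delta> + 1) \<beta>" and "unfrozen V E (\<Delta> + 1) \<beta>"
  shows "reconf_equiv V E (\<Delta> + 1) \<alpha> \<beta>"
proof -
  note sg = assms(1) and kc = assms(2) and reg = assms(3)
  obtain u u' where u: "dist_two V E u u'" "\<alpha> u = \<alpha> u'"
    using unfrozen_imp_monochromatic_dist_two[OF sg reg assms(4,5)] by blast
  obtain w w' where w: "dist_two V E w w'" "\<beta> w = \<beta> w'"
    using unfrozen_imp_monochromatic_dist_two[OF sg reg assms(6,7)] by blast
  show ?thesis
  proof (cases "{u, u'} \<inter> {w, w'} = {}")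
    case True
    then show ?thesis
      using reconf_equiv_disjoint_monochromatic_dist_two[OF sg kc reg u(1) w(1) _ assms(4,6) u(2) w(2)]
      by blast
  next
    case False
    then obtain t where t: "t \<in> {u, u'}" "t \<in> {w, w'}"
      by blast
    have "connected_induced V E"
      using kc by (rule k_connected_imp_connected) simp
    then obtain r r' where r: "dist_two V E r r'" "E t r" "E t r'"
      using exists_dist_two_in_nbrs[OF sg _ reg] u(1) t(1) unfolding dist_two_def by blast
    have disj: "{u, u'} \<inter> {r, r'} = {}" "{r, r'} \<inter> {w, w'} = {}"
      using dist_two_no_edge[OF sg u(1) t(1)] dist_two_no_edge[OF sg w(1) t(2)] r(2,3) by blast+
    obtain \<gamma> where \<gamma>: "proper_colouring V E (\<Delta> + 1) \<gamma>" "\<gamma> r = \<gamma> r'"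
      using exists_colouring_monochromatic_dist_two[OF sg reg r(1)] by blast
    have "reconf_equiv V E (\<Delta> + 1) \<alpha> \<gamma>"
      using reconf_equiv_disjoint_monochromatic_dist_two[OF sg kc reg u(1) r(1) disj(1) assms(4) \<gamma>(1)]
        u(2) \<gamma>(2) .
    also have "reconf_equiv V E (\<Delta> + 1) \<gamma> \<beta>"
      using reconf_equiv_disjoint_monochromatic_dist_two[OF sg kc reg r(1) w(1) disj(2) \<gamma>(1) assms(6)]
        \<gamma>(2) w(2) .
    finally show ?thesis .
  qed
qed

end
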